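(* The bi-immune symmetric group $G_{\mathfrak{B}}$ is dense in $\mathrm{Sym}(\mathbb{N})$ with respect to the topology of pointwise convergence (equivalently, with respect to the metric $d$ below).
   Context: $\mathbb{N}$ denotes the non-negative integers, and $\mathrm{Sym}(\mathbb{N})$ the group of all permutations of $\mathbb{N}$ under composition ($g \circ f$ means apply $f$ first). For $\sigma, \tau \in \mathrm{Sym}(\mathbb{N})$ let $\rho(\sigma,\tau) = 0$ if $\sigma = \tau$, and otherwise $\rho(\sigma,\tau) = 2^{-j}$ where $j$ is the least $i$ with $\sigma(i) \neq \tau(i)$; set $d(\sigma,\tau) = \max\{\rho(\sigma,\tau), \rho(\sigma^{-1},\tau^{-1})\}$, a complete metric inducing the pointwise convergence topology. For $i \in \mathbb{N}$, $\sigma_{(i)}$ is the permutation swapping $i$ and $i+1$ and fixing all other numbers. For $A \subseteq \mathbb{N}$ with increasing enumeration $a_0 < a_1 < \cdots$, define $\sigma_A(x) = \lim_{n \to \infty} (\sigma_{(a_0)} \circ \sigma_{(a_1)} \circ \cdots \circ \sigma_{(a_n)})(x)$ (eventually constant for each $x$). A set $A$ is immune if it is infinite and contains no infinite computably enumerable subset; $A$ is bi-immune if both $A$ and $\mathbb{N} - A$ are immune. For bi-immune $A$, $\sigma_A$ is a permutation of $\mathbb{N}$. The bi-immune symmetric group $G_{\mathfrak{B}}$ is the subgroup of $\mathrm{Sym}(\mathbb{N})$ generated by $\{\sigma_A : A \text{ bi-immune}\}$. *)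

theory Defs
  imports Complex_Main "HOL-Library.Infinite_Set" "HOL-Algebra.Bij" "HOL-Algebra.Generated_Groups"
begin

datatype recf = Zero | Succ | Proj nat | Comp recf "recf list" | Prec recf recf | Mn recf

inductive eval :: "recf \<Rightarrow> nat list \<Rightarrow> nat \<Rightarrow> bool" where
  eval_Zero: "eval Zero xs 0"
| eval_Succ: "eval Succ (x # xs) (Suc x)"
| eval_Proj: "i < length xs \<Longrightarrow> eval (Proj i) xs (xs ! i)"
| eval_Comp: "list_all2 (\<lambda>g y. eval g xs y) gs ys \<Longrightarrow> eval f ys r \<Longrightarrow> eval (Comp f gs) xs r"
| eval_Prec0: "eval f xs r \<Longrightarrow> eval (Prec f g) (0 # xs) r"
| eval_PrecS: "eval (Prec f g) (n # xs) r \<Longrightarrow> eval g (n # r # xs) r'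
               \<Longrightarrow> eval (Prec f g) (Suc n # xs) r'"
| eval_Mn: "eval f (y # xs) 0 \<Longrightarrow> (\<forall>z<y. \<exists>r. eval f (z # xs) r \<and> 0 < r)
               \<Longrightarrow> eval (Mn f) xs y"

definition ce :: "nat set \<Rightarrow> bool" where
  "ce A \<longleftrightarrow> (\<exists>f. A = {x. \<exists>y. eval f [x] y})"

definition immune :: "nat set \<Rightarrow> bool" where
  "immune A \<longleftrightarrow> infinite A \<and> \<not> (\<exists>B. B \<subseteq> A \<and> infinite B \<and> ce B)"

definition bi_immune :: "nat set \<Rightarrow> bool" where
  "bi_immune A \<longleftrightarrow> immune A \<and> immune (UNIV - A)"

definition adj_swap :: "nat \<Rightarrow> nat \<Rightarrow> nat" where
  "adj_swap i x = (if x = i then Suc i else if x = Suc i then i else x)"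

text \<open>prefix_comp A n = sigma_(a_0) o sigma_(a_1) o ... o sigma_(a_n)\<close>
primrec prefix_comp :: "nat set \<Rightarrow> nat \<Rightarrow> nat \<Rightarrow> nat" where
  "prefix_comp A 0 = adj_swap (enumerate A 0)"
| "prefix_comp A (Suc n) = prefix_comp A n \<circ> adj_swap (enumerate A (Suc n))"

definition sigma_set :: "nat set \<Rightarrow> nat \<Rightarrow> nat" where
  "sigma_set A x = (THE y. \<exists>N. \<forall>n\<ge>N. prefix_comp A n x = y)"

definition G_B :: "(nat \<Rightarrow> nat) set" where
  "G_B = generate (BijGroup (UNIV :: nat set)) {sigma_set A | A. bi_immune A}"

definition rho :: "(nat \<Rightarrow> nat) \<Rightarrow> (nat \<Rightarrow> nat) \<Rightarrow> real" where
  "rho s t = (if s = t then 0 else (1/2) ^ (LEAST i. s i \<noteq> t i))"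

definition perm_dist :: "(nat \<Rightarrow> nat) \<Rightarrow> (nat \<Rightarrow> nat) \<Rightarrow> real" where
  "perm_dist s t = max (rho s t) (rho (Hilbert_Choice.inv s) (Hilbert_Choice.inv t))"

end

theory Submission
  imports Defs "HOL-Library.Countable_Set" "HOL-Combinatorics.Permutations"
begin

text \<open>
  For an infinite set \<open>A\<close>, \<open>\<sigma>\<^sub>A(x)\<close> is already computed by the first \<open>x + 1\<close> factors, and
  when \<open>k < min A\<close> we get \<open>\<sigma>\<^bsub>{k} \<union> A\<^esub> = \<sigma>\<^sub>(\<^sub>k\<^sub>) \<circ> \<sigma>\<^sub>A\<close>. Bi-immunity survives adding or removing
  finitely many elements if it is witnessed by splitting every infinite c.e. set, and such a set
  exists because there are only countably many c.e. sets. Hence every adjacent transposition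
  \<open>\<sigma>\<^bsub>{k} \<union> A\<^esub> \<circ> \<sigma>\<^sub>A\<^sup>-\<^sup>1\<close> lies in \<open>G\<^sub>\<frak>B\<close>, so \<open>G\<^sub>\<frak>B\<close> contains all finitary permutations, and these
  are dense: a permutation of \<open>{..K}\<close> can match any bijection and its inverse on \<open>{..n}\<close>.
\<close>

section \<open>The permutations \<open>\<sigma>\<^sub>A\<close>\<close>

lemma adj_swap_eq_transpose: "adj_swap i = Transposition.transpose i (Suc i)"
  by (auto simp: fun_eq_iff adj_swap_def Transposition.transpose_def)

lemma adj_swap_involutive [simp]: "adj_swap i (adj_swap i x) = x"
  by (auto simp: adj_swap_def)

lemma inj_adj_swap: "inj (adj_swap i)"
  by (metis injI adj_swap_involutive)

lemma adj_swap_le: "x \<le> c \<Longrightarrow> a \<noteq> c \<Longrightarrow> adj_swap a x \<le> c"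
  by (auto simp: adj_swap_def)

lemma prefix_comp_stable:
  assumes "infinite A" "x \<le> n"
  shows "prefix_comp A n x = prefix_comp A x x"
  using assms(2)
proof (induction n)
  case (Suc n)
  show ?case
  proof (cases "x = Suc n")
    case False
    with Suc.prems have "x \<le> n" by simp
    moreover have "Suc n \<le> enumerate A (Suc n)"
      using le_enumerate assms(1) by blast
    ultimately have "adj_swap (enumerate A (Suc n)) x = x"
      by (auto simp: adj_swap_def)
    then show ?thesis using Suc.IH \<open>x \<le> n\<close> by simp
  qed simp
qed simp

lemma sigma_set_eq_prefix_comp:
  assumes "infinite A" "x \<le> n"
  shows "sigma_set A x = prefix_comp A n x"
proof -
  have "sigma_set A x = prefix_comp A x x"
    unfolding sigma_set_def
  proof (rule the_equality)
    show "\<exists>N. \<forall>n\<ge>N. prefix_comp A n x = prefix_comp A x x"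
      using prefix_comp_stable[OF assms(1)] by blast
  next
    fix y assume "\<exists>N. \<forall>n\<ge>N. prefix_comp A n x = y"
    then obtain N where "\<forall>n\<ge>N. prefix_comp A n x = y" by blast
    then have "prefix_comp A (max N x) x = y" by simp
    then show "y = prefix_comp A x x"
      using prefix_comp_stable[OF assms(1), of x "max N x"] by simp
  qed
  then show ?thesis using prefix_comp_stable[OF assms] by simp
qed

lemma inj_prefix_comp: "inj (prefix_comp A n)"
  by (induction n) (auto simp only: prefix_comp.simps intro: inj_compose inj_adj_swap)

lemma inj_sigma_set:
  assumes "infinite A"
  shows "inj (sigma_set A)"
proof (rule injI)
  fix x y assume "sigma_set A x = sigma_set A y"
  then have "prefix_comp A (max x y) x = prefix_comp A (max x y) y"
    using sigma_set_eq_prefix_comp[OF assms] by (metis max.cobounded1 max.cobounded2)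
  then show "x = y" using inj_prefix_comp by (simp add: inj_eq)
qed

lemma prefix_comp_le:
  assumes "infinite A" "c \<notin> A" "x \<le> c"
  shows "prefix_comp A n x \<le> c"
  using assms(3)
proof (induction n arbitrary: x)
  case 0
  then show ?case using enumerate_in_set[OF assms(1), of 0] assms(2) by (auto intro: adj_swap_le)
next
  case (Suc n)
  then have "adj_swap (enumerate A (Suc n)) x \<le> c"
    using enumerate_in_set[OF assms(1), of "Suc n"] assms(2) by (auto intro: adj_swap_le)
  then show ?case using Suc.IH by simp
qed

text \<open>Every \<open>c \<notin> A\<close> is a barrier: \<open>\<sigma>\<^sub>A\<close> maps \<open>{..c}\<close> injectively into itself.\<close>

lemma bij_sigma_set:
  assumes "infinite A" "infinite (UNIV - A)"
  shows "bij (sigma_set A)"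
proof (rule bijI)
  show "inj (sigma_set A)" using inj_sigma_set[OF assms(1)] .
  show "surj (sigma_set A)"
    unfolding surj_def
  proof
    fix y
    obtain c where c: "c \<notin> A" "y < c"
      using assms(2) unfolding infinite_nat_iff_unbounded by auto
    have "sigma_set A ` {..c} \<subseteq> {..c}"
      using sigma_set_eq_prefix_comp[OF assms(1)] prefix_comp_le[OF assms(1) c(1)] by auto
    moreover have "inj_on (sigma_set A) {..c}"
      using inj_sigma_set[OF assms(1)] inj_on_subset by blast
    ultimately have "sigma_set A ` {..c} = {..c}" by (simp add: endo_inj_surj)
    with c show "\<exists>x. y = sigma_set A x" by (metis atMost_iff image_iff less_imp_le)
  qed
qed

lemma prefix_comp_insert_min:
  assumes "infinite A" "\<forall>a\<in>A. k < a"
  shows "prefix_comp (insert k A) (Suc n) = adj_swap k \<circ> prefix_comp A n"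
proof -
  have enum_0: "enumerate (insert k A) 0 = k"
    using assms(2) by (simp add: enumerate_0, intro Least_equality) (auto simp: less_imp_le)
  have "insert k A - {k} = A" using assms(2) by auto
  then have enum_Suc: "enumerate (insert k A) (Suc m) = enumerate A m" for m
    using enum_0 by (simp add: enumerate_Suc')
  show ?thesis
    by (induction n) (simp_all only: prefix_comp.simps enum_0 enum_Suc comp_assoc)
qed

lemma sigma_set_insert_min:
  assumes "infinite A" "\<forall>a\<in>A. k < a"
  shows "sigma_set (insert k A) = adj_swap k \<circ> sigma_set A"
proof
  fix x
  have "sigma_set (insert k A) x = prefix_comp (insert k A) (Suc x) x"
    using assms(1) by (intro sigma_set_eq_prefix_comp) simp_all
  also have "\<dots> = adj_swap k (prefix_comp A x x)"
    unfolding prefix_comp_insert_min[OF assms] by simp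
  also have "\<dots> = adj_swap k (sigma_set A x)"
    using sigma_set_eq_prefix_comp[OF assms(1), of x x] by simp
  finally show "sigma_set (insert k A) x = (adj_swap k \<circ> sigma_set A) x" by simp
qed

section \<open>Existence of bi-immune sets\<close>

lemma obtain_strict_mono_selection:
  fixes W :: "nat \<Rightarrow> nat set"
  assumes "\<And>n. infinite (W n)"
  obtains s where "strict_mono s" "\<And>n. s n \<in> W n"
proof -
  have "\<exists>s. \<forall>n. s n \<in> W n \<and> s n < s (Suc n)"
  proof (rule dependent_nat_choice)
    show "\<exists>x. x \<in> W 0" using infinite_imp_nonempty[OF assms] by blast
    fix x n
    show "\<exists>y. y \<in> W (Suc n) \<and> x < y"
      using assms unfolding infinite_nat_iff_unbounded by blast
  qed
  then show thesis using that strict_mono_Suc_iff by blast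
qed

text \<open>
  Enumerate the family with every member repeated at every cut-off \<open>j\<close>, pick a strictly
  increasing sequence meeting the \<open>k div 2\<close>-th set at step \<open>k\<close>, and keep its even-indexed terms.
\<close>

lemma obtain_set_splitting_countable_family:
  fixes F :: "nat set set"
  assumes "countable F" "\<And>B. B \<in> F \<Longrightarrow> infinite B"
  obtains A where "\<And>B. B \<in> F \<Longrightarrow> infinite (B \<inter> A) \<and> infinite (B - A)"
proof (cases "F = {}")
  case False
  define W where "W n = from_nat_into F (fst (prod_decode n)) - {..<snd (prod_decode n)}" for n
  have W_infinite: "infinite (W n)" for n
    unfolding W_def using assms(2)[OF from_nat_into[OF False]] by (intro Diff_infinite_finite) simp_all
  obtain s where s: "strict_mono s" "\<And>k. s k \<in> W (k div 2)"
    using obtain_strict_mono_selection[of "\<lambda>k. W (k div 2)"] W_infinite by blast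
  define A where "A = s ` {k. even k}"
  have "infinite (B \<inter> A) \<and> infinite (B - A)" if "B \<in> F" for B
    unfolding infinite_nat_iff_unbounded_le
  proof (intro conjI allI)
    fix j
    define n where "n = prod_encode (to_nat_on F B, j)"
    have "W n = B - {..<j}"
      using that assms(1) by (simp add: W_def n_def)
    then have "s (2 * n) \<in> B - {..<j}" "s (2 * n + 1) \<in> B - {..<j}"
      using s(2)[of "2 * n"] s(2)[of "2 * n + 1"] by simp_all
    moreover have "s (2 * n) \<in> A" "s (2 * n + 1) \<notin> A"
      using strict_mono_eq[OF s(1)] by (auto simp: A_def)
    ultimately show "\<exists>a\<ge>j. a \<in> B \<inter> A" "\<exists>a\<ge>j. a \<in> B - A"
      by (auto simp: not_less)
  qed
  then show thesis by (rule that)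
qed blast

instance recf :: countable by countable_datatype

lemma countable_ce_sets: "countable {B. ce B}"
proof -
  have "{B. ce B} = range (\<lambda>f. {x. \<exists>y. eval f [x] y})"
    by (auto simp: ce_def)
  then show ?thesis by simp
qed

lemma ce_UNIV: "ce UNIV"
  unfolding ce_def by (rule exI[of _ Zero]) (auto intro: eval_Zero)

definition splits_ce_sets :: "nat set \<Rightarrow> bool" where
  "splits_ce_sets A \<longleftrightarrow> (\<forall>B. ce B \<and> infinite B \<longrightarrow> infinite (B \<inter> A) \<and> infinite (B - A))"

lemma ex_splits_ce_sets: "\<exists>A. splits_ce_sets A"
proof -
  have "countable {B. ce B \<and> infinite B}"
    by (rule countable_subset[OF _ countable_ce_sets]) blast
  then obtain A where "\<And>B. B \<in> {B. ce B \<and> infinite B} \<Longrightarrow> infinite (B \<inter> A) \<and> infinite (B - A)"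
    using obtain_set_splitting_countable_family by blast
  then show ?thesis unfolding splits_ce_sets_def by blast
qed

lemma splits_ce_sets_finite_change:
  assumes "splits_ce_sets A" "finite (A - C)" "finite (C - A)"
  shows "splits_ce_sets C"
  unfolding splits_ce_sets_def
proof (intro allI impI)
  fix B assume "ce B \<and> infinite B"
  with assms(1) have "infinite (B \<inter> A)" "infinite (B - A)"
    by (auto simp: splits_ce_sets_def)
  moreover have "B \<inter> A - (A - C) \<subseteq> B \<inter> C" "B - A - (C - A) \<subseteq> B - C" by auto
  ultimately show "infinite (B \<inter> C) \<and> infinite (B - C)"
    using assms(2,3) by (meson Diff_infinite_finite infinite_super)
qed

lemma bi_immune_if_splits_ce_sets:
  assumes "splits_ce_sets A"
  shows "bi_immune A"
proof -
  have "infinite A" "infinite (UNIV - A)"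
    using assms ce_UNIV unfolding splits_ce_sets_def by auto
  moreover have "B \<inter> A \<noteq> {}" "B - A \<noteq> {}" if "ce B" "infinite B" for B
    using assms that unfolding splits_ce_sets_def by (metis finite.emptyI)+
  ultimately show ?thesis
    unfolding bi_immune_def immune_def by blast
qed

section \<open>Adjacent transpositions in \<open>G\<^sub>\<frak>B\<close>\<close>

abbreviation Sym :: "(nat \<Rightarrow> nat) monoid" where
  "Sym \<equiv> BijGroup UNIV"

lemma Sym_mult_eq_comp: "bij f \<Longrightarrow> bij g \<Longrightarrow> f \<otimes>\<^bsub>Sym\<^esub> g = f \<circ> g"
  by (simp add: BijGroup_def Bij_def compose_def fun_eq_iff)

lemma Sym_inv_eq_inv: "bij f \<Longrightarrow> inv\<^bsub>Sym\<^esub> f = Hilbert_Choice.inv f"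
  using inv_BijGroup[of f UNIV] by (simp add: Bij_def fun_eq_iff)

lemma carrier_Sym: "carrier Sym = {f. bij f}"
  by (auto simp: BijGroup_def Bij_def)

lemma subgroup_G_B: "subgroup G_B Sym"
proof -
  have "{sigma_set A | A. bi_immune A} \<subseteq> carrier Sym"
    by (auto simp: carrier_Sym bi_immune_def immune_def intro: bij_sigma_set)
  then show ?thesis
    unfolding G_B_def by (rule group.generate_is_subgroup[OF group_BijGroup])
qed

lemma bij_if_in_G_B: "f \<in> G_B \<Longrightarrow> bij f"
  using subgroup.subset[OF subgroup_G_B] by (auto simp: carrier_Sym)

lemma id_in_G_B: "id \<in> G_B"
  using subgroup.one_closed[OF subgroup_G_B] by (simp add: BijGroup_def restrict_UNIV id_def)

lemma comp_in_G_B: "f \<in> G_B \<Longrightarrow> g \<in> G_B \<Longrightarrow> f \<circ> g \<in> G_B"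
  using subgroup.m_closed[OF subgroup_G_B] by (simp add: Sym_mult_eq_comp bij_if_in_G_B)

lemma inv_in_G_B: "f \<in> G_B \<Longrightarrow> Hilbert_Choice.inv f \<in> G_B"
  using subgroup.m_inv_closed[OF subgroup_G_B] by (simp add: Sym_inv_eq_inv bij_if_in_G_B)

lemma sigma_set_in_G_B: "bi_immune A \<Longrightarrow> sigma_set A \<in> G_B"
  unfolding G_B_def by (blast intro: generate.incl)

lemma adj_swap_in_G_B: "adj_swap k \<in> G_B"
proof -
  obtain A where A: "splits_ce_sets A" using ex_splits_ce_sets by blast
  define A' where "A' = A \<inter> {k<..}"
  have split_A': "splits_ce_sets A'"
    using A by (rule splits_ce_sets_finite_change) (auto simp: A'_def intro: finite_subset[of _ "{..k}"])
  then have split_insert: "splits_ce_sets (insert k A')"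
    by (rule splits_ce_sets_finite_change) (auto intro: finite_subset[of _ "{k}"])
  have bi_A': "bi_immune A'" and bi_insert: "bi_immune (insert k A')"
    using split_A' split_insert by (simp_all add: bi_immune_if_splits_ce_sets)
  then have "infinite A'" "infinite (UNIV - A')"
    by (simp_all add: bi_immune_def immune_def)
  moreover have "\<forall>a\<in>A'. k < a" by (simp add: A'_def)
  ultimately have "sigma_set (insert k A') = adj_swap k \<circ> sigma_set A'"
    and "bij (sigma_set A')"
    by (simp_all add: sigma_set_insert_min bij_sigma_set)
  then have "sigma_set (insert k A') \<circ> Hilbert_Choice.inv (sigma_set A') = adj_swap k"
    by (metis bij_is_surj comp_assoc comp_id surj_iff)
  moreover have "sigma_set (insert k A') \<circ> Hilbert_Choice.inv (sigma_set A') \<in> G_B"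
    using bi_A' bi_insert by (simp add: comp_in_G_B inv_in_G_B sigma_set_in_G_B)
  ultimately show ?thesis by simp
qed

section \<open>Finitary permutations\<close>

lemma transpose_Suc_conj:
  assumes "a < b"
  shows "Transposition.transpose a (Suc b) = adj_swap b \<circ> Transposition.transpose a b \<circ> adj_swap b"
  using assms by (auto simp: fun_eq_iff adj_swap_def Transposition.transpose_def)

locale adj_swap_closed =
  fixes H :: "(nat \<Rightarrow> nat) set"
  assumes id_in: "id \<in> H"
    and comp_in: "\<And>f g. f \<in> H \<Longrightarrow> g \<in> H \<Longrightarrow> f \<circ> g \<in> H"
    and adj_swap_in: "\<And>i. adj_swap i \<in> H"
begin

lemma transpose_in: "Transposition.transpose a b \<in> H"
proof -
  have "Transposition.transpose a b \<in> H" if "a \<le> b" for a b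
    using that
  proof (induction b rule: dec_induct)
    case base
    show ?case using id_in by (simp add: id_def)
  next
    case (step b)
    show ?case
    proof (cases "a = b")
      case True
      then show ?thesis using adj_swap_in by (simp add: adj_swap_eq_transpose)
    next
      case False
      with step.hyps have "a < b" by simp
      then show ?thesis
        unfolding transpose_Suc_conj[OF \<open>a < b\<close>] by (intro comp_in adj_swap_in step.IH)
    qed
  qed
  then show ?thesis
    by (metis nat_le_linear transpose_commute)
qed

lemma permutes_in:
  assumes "p permutes S" "finite S"
  shows "p \<in> H"
  using assms
proof (induction p rule: permutes_induct)
  case id
  then show ?case by (rule id_in)
next
  case (swap a b p)
  then show ?case by (intro comp_in transpose_in)
qed

end

interpretation G_B: adj_swap_closed G_B
  by unfold_locales (simp_all add: id_in_G_B comp_in_G_B adj_swap_in_G_B)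

lemma obtain_permutes_extending:
  assumes "finite T" "S \<subseteq> T" "inj_on f S" "f ` S \<subseteq> T"
  obtains p where "p permutes T" "\<And>x. x \<in> S \<Longrightarrow> p x = f x"
proof -
  have "finite S" using assms(1,2) by (rule finite_subset[rotated])
  then have "card (T - S) = card (T - f ` S)"
    using assms by (simp add: card_Diff_subset card_image)
  then obtain h where h: "bij_betw h (T - S) (T - f ` S)"
    using assms(1) by (metis finite_Diff finite_same_card_bij)
  define p where "p x = (if x \<in> S then f x else if x \<in> T then h x else x)" for x
  have "bij_betw p S (f ` S)"
    using inj_on_imp_bij_betw[OF assms(3)] by (rule bij_betw_cong[THEN iffD1, rotated]) (simp add: p_def)
  moreover have "bij_betw p (T - S) (T - f ` S)"
    using h by (rule bij_betw_cong[THEN iffD1, rotated]) (simp add: p_def)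
  ultimately have "bij_betw p (S \<union> (T - S)) (f ` S \<union> (T - f ` S))"
    by (rule bij_betw_combine) blast
  then have "bij_betw p T T"
    using assms(2,4) by (simp add: Un_Diff_cancel Un_absorb1)
  then have "p permutes T"
    using assms(2) by (intro bij_imp_permutes) (auto simp: p_def)
  then show thesis using that by (simp add: p_def)
qed

lemma obtain_finitary_perm_agreeing:
  fixes \<tau> :: "nat \<Rightarrow> nat"
  assumes "bij \<tau>"
  obtains K p where "p permutes {..K}"
    "\<And>i. i < n \<Longrightarrow> p i = \<tau> i \<and> Hilbert_Choice.inv p i = Hilbert_Choice.inv \<tau> i"
proof -
  define S where "S = {..<n} \<union> Hilbert_Choice.inv \<tau> ` {..<n}"
  define K where "K = Max (S \<union> \<tau> ` S)"
  have "finite (S \<union> \<tau> ` S)" by (simp add: S_def)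
  then have "S \<subseteq> {..K}" "\<tau> ` S \<subseteq> {..K}"
    by (auto simp: K_def intro: Max_ge)
  moreover have "inj_on \<tau> S"
    using assms bij_is_inj inj_on_subset by blast
  ultimately obtain p where p: "p permutes {..K}" "\<And>x. x \<in> S \<Longrightarrow> p x = \<tau> x"
    using obtain_permutes_extending[of "{..K}" S \<tau>] by blast
  have "p i = \<tau> i \<and> Hilbert_Choice.inv p i = Hilbert_Choice.inv \<tau> i" if "i < n" for i
  proof
    show "p i = \<tau> i" using that p(2) by (simp add: S_def)
    have "p (Hilbert_Choice.inv \<tau> i) = i"
      using that p(2) assms by (simp add: S_def bij_is_surj surj_f_inv_f)
    then show "Hilbert_Choice.inv p i = Hilbert_Choice.inv \<tau> i"
      using permutes_inv_eq[OF p(1)] by blast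
  qed
  then show thesis using that p(1) by blast
qed

lemma rho_le_if_agree:
  assumes "\<And>i. i < n \<Longrightarrow> f i = g i"
  shows "rho f g \<le> (1/2) ^ n"
proof (cases "f = g")
  case False
  then obtain i where "f i \<noteq> g i" by auto
  then have "f (LEAST i. f i \<noteq> g i) \<noteq> g (LEAST i. f i \<noteq> g i)" by (rule LeastI)
  then have "n \<le> (LEAST i. f i \<noteq> g i)" using assms not_less by blast
  then show ?thesis using False by (simp add: rho_def power_decreasing)
qed (simp add: rho_def)

lemma perm_dist_le_if_agree:
  assumes "\<And>i. i < n \<Longrightarrow> f i = g i \<and> Hilbert_Choice.inv f i = Hilbert_Choice.inv g i"
  shows "perm_dist f g \<le> (1/2) ^ n"
  using assms by (simp add: perm_dist_def rho_le_if_agree)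

theorem mainTheorem8:
  "\<forall>\<tau>::nat \<Rightarrow> nat. bij \<tau> \<longrightarrow> (\<forall>\<epsilon>>0. \<exists>g\<in>G_B. perm_dist g \<tau> < \<epsilon>)"
proof (intro allI impI)
  fix \<tau> :: "nat \<Rightarrow> nat" and \<epsilon> :: real
  assume "bij \<tau>" "\<epsilon> > 0"
  obtain n where n: "(1/2::real) ^ n < \<epsilon>"
    using real_arch_pow_inv[OF \<open>\<epsilon> > 0\<close>, of "1/2"] by auto
  obtain K p where p: "p permutes {..K}"
    "\<And>i. i < n \<Longrightarrow> p i = \<tau> i \<and> Hilbert_Choice.inv p i = Hilbert_Choice.inv \<tau> i"
    using obtain_finitary_perm_agreeing[OF \<open>bij \<tau>\<close>] by blast
  have "p \<in> G_B"
    using p(1) by (simp add: G_B.permutes_in)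
  have "perm_dist p \<tau> \<le> (1/2) ^ n"
    using p(2) by (rule perm_dist_le_if_agree)
  with n have "perm_dist p \<tau> < \<epsilon>" by linarith
  with \<open>p \<in> G_B\<close> show "\<exists>g\<in>G_B. perm_dist g \<tau> < \<epsilon>" by blast
qed

end
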